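(* Let $\mu>0$, $\gamma\ge0$ and $x\ge\widetilde x\ge0$. Let $S$ and $\widetilde S$ be constructed as below from the same Brownian motion with drift $B^\mu$ and the same Poisson process $N^\gamma$, with initial values $x$ and $\widetilde x$ respectively, and let $T_{\mathrm{coupl}}=\inf\{t\ge0:S_t=\widetilde S_t\}$. Then for all $0\le\alpha\le\mu^2/2$, $$\mathbb E[e^{\alpha T_{\mathrm{coupl}}}]\le e^{x(\mu-\sqrt{\mu^2-2\alpha})}.$$
   Context: Let $B$ be a standard Brownian motion started at $0$ and $B^\mu_t=B_t+\mu t$. Let $N^\gamma$ be an independent Poisson point process on $\mathbb R\times[0,\infty)$ with intensity $\gamma\,dx\,dt$. Given an initial value $s_0\ge0$, define $\tau_0=0$, $S^{(0)}_t=\max\{s_0,\sup_{0\le s\le t}B^\mu_s\}$, and recursively for $n\ge1$: $\tau_n=\inf\{t>\tau_{n-1}: N^\gamma\cap([B^\mu_t,S^{(n-1)}_t]\times\{t\})\ne\emptyset\}$, $S^{(n)}_{\tau_n}$ the space coordinate of the (a.s. unique) point of $N^\gamma$ in $[B^\mu_{\tau_n},S^{(n-1)}_{\tau_n}]\times\{\tau_n\}$, and $S^{(n)}_t=\max\{S^{(n)}_{\tau_n},\sup_{\tau_n\le s\le t}B^\mu_s\}$ for $t\ge\tau_n$. Set $S_t=S^{(n)}_t$ for $t\in[\tau_n,\tau_{n+1})$. (With $R_t=\sum_{i=1}^n(S^{(i-1)}_{\tau_i}-S^{(i)}_{\tau_i})$ for $t\in[\tau_n,\tau_{n+1})$ and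 $X_t=R_t+S_t-B^\mu_t$, this gives the $(\gamma,\mu)$-Brownian ratchet started in $(s_0,0)$.) $S$ is the process with $s_0=x$ and $\widetilde S$ the one with $s_0=\widetilde x$. *)

theory Defs
  imports "HOL-Probability.Probability"
begin

text \<open>Standard Brownian motion on [0,inf) (paths indexed by real t, only t >= 0 relevant).\<close>
definition std_BM :: "'a measure \<Rightarrow> (real \<Rightarrow> 'a \<Rightarrow> real) \<Rightarrow> bool" where
  "std_BM M B \<longleftrightarrow> prob_space M \<and>
     (\<forall>t. B t \<in> borel_measurable M) \<and>
     (\<forall>\<omega>\<in>space M. B 0 \<omega> = 0 \<and> continuous_on {0..} (\<lambda>t. B t \<omega>)) \<and>
     (\<forall>s t. 0 \<le> s \<and> s < t \<longrightarrow>
        distributed M lborel (\<lambda>\<omega>. B t \<omega> - B s \<omega>)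
          (\<lambda>v. ennreal (normal_density 0 (sqrt (t - s)) v))) \<and>
     (\<forall>ts. sorted_wrt (<) ts \<and> (\<forall>t\<in>set ts. 0 \<le> t) \<longrightarrow>
        prob_space.indep_vars M (\<lambda>_. borel)
          (\<lambda>i \<omega>. B (ts ! Suc i) \<omega> - B (ts ! i) \<omega>) {..<length ts - 1})"

definition ppp_test_set :: "(real \<times> real) set \<Rightarrow> bool" where
  "ppp_test_set A \<longleftrightarrow> A \<in> sets (borel :: (real \<times> real) measure) \<and> A \<subseteq> UNIV \<times> {0..}
      \<and> emeasure (lborel :: (real \<times> real) measure) A < \<infinity>"

definition poisson_pp :: "'a measure \<Rightarrow> real \<Rightarrow> ('a \<Rightarrow> (real \<times> real) set) \<Rightarrow> bool" where
  "poisson_pp M \<gamma> N \<longleftrightarrow> prob_space M \<and>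
     (\<forall>\<omega>\<in>space M. N \<omega> \<subseteq> UNIV \<times> {0..}) \<and>
     (\<forall>A. ppp_test_set A \<longrightarrow>
        (AE \<omega> in M. finite (N \<omega> \<inter> A)) \<and>
        (\<lambda>\<omega>. card (N \<omega> \<inter> A)) \<in> measurable M (count_space UNIV) \<and>
        (\<forall>k::nat. measure M {\<omega>\<in>space M. card (N \<omega> \<inter> A) = k} =
           (\<gamma> * measure lborel A) ^ k / fact k * exp (- (\<gamma> * measure lborel A)))) \<and>
     (\<forall>\<A>. finite \<A> \<and> disjoint \<A> \<and> (\<forall>A\<in>\<A>. ppp_test_set A) \<longrightarrow>
        prob_space.indep_vars M (\<lambda>_. count_space UNIV) (\<lambda>A \<omega>. card (N \<omega> \<inter> A)) \<A>)"

definition BM_PPP_indep :: "'a measure \<Rightarrow> (real \<Rightarrow> 'a \<Rightarrow> real) \<Rightarrow> ('a \<Rightarrow> (real \<times> real) set) \<Rightarrow> bool" where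
  "BM_PPP_indep M B N \<longleftrightarrow>
     (\<forall>I \<J>. finite I \<and> I \<subseteq> {0..} \<and> finite \<J> \<and> (\<forall>A\<in>\<J>. ppp_test_set A) \<longrightarrow>
        prob_space.indep_set M
          {(\<lambda>\<omega>. \<lambda>t\<in>I. B t \<omega>) -` S \<inter> space M | S. S \<in> sets (Pi\<^sub>M I (\<lambda>_. borel))}
          {(\<lambda>\<omega>. \<lambda>A\<in>\<J>. card (N \<omega> \<inter> A)) -` S \<inter> space M | S.
             S \<in> sets (Pi\<^sub>M \<J> (\<lambda>_. count_space UNIV))})"

text \<open>Pathwise ratchet construction. Given a path b (= B^mu), a point configuration P and s0,
  rat_data b P s0 n = (tau_n, S^(n)_{tau_n}); tau_n = infinity if the n-th event never happens.\<close>
primrec rat_data :: "(real \<Rightarrow> real) \<Rightarrow> (real \<times> real) set \<Rightarrow> real \<Rightarrow> nat \<Rightarrow> ereal \<times> real" where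
  "rat_data b P s0 0 = (0, s0)"
| "rat_data b P s0 (Suc n) =
     (case rat_data b P s0 n of (\<tau>, y) \<Rightarrow>
       if \<tau> = \<infinity> then (\<infinity>, y) else
       (let Sprev = (\<lambda>t. max y (Sup (b ` {real_of_ereal \<tau>..t})));
            hits = {t. ereal t > \<tau> \<and> (\<exists>z. (z, t) \<in> P \<and> b t \<le> z \<and> z \<le> Sprev t)};
            \<tau>' = Inf (ereal ` hits)
        in if \<tau>' = \<infinity> then (\<infinity>, y)
           else (\<tau>', SOME z. (z, real_of_ereal \<tau>') \<in> P \<and> b (real_of_ereal \<tau>') \<le> z
                              \<and> z \<le> Sprev (real_of_ereal \<tau>'))))"

text \<open>S_t = S^(n)_t for t in [tau_n, tau_{n+1}).\<close>
definition ratchet_S :: "(real \<Rightarrow> real) \<Rightarrow> (real \<times> real) set \<Rightarrow> real \<Rightarrow> real \<Rightarrow> real" where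
  "ratchet_S b P s0 t =
     (let n = (GREATEST n. fst (rat_data b P s0 n) \<le> ereal t);
          \<tau> = fst (rat_data b P s0 n); y = snd (rat_data b P s0 n)
      in max y (Sup (b ` {real_of_ereal \<tau>..t})))"

definition coupl_time :: "(real \<Rightarrow> real) \<Rightarrow> (real \<Rightarrow> real) \<Rightarrow> ereal" where
  "coupl_time S S' = Inf (ereal ` {t. 0 \<le> t \<and> S t = S' t})"

definition exp_time :: "real \<Rightarrow> ereal \<Rightarrow> ennreal" where
  "exp_time \<alpha> T = (if T = \<infinity> then (if \<alpha> = 0 then 1 else \<top>) else ennreal (exp (\<alpha> * real_of_ereal T)))"

end

theory Submission
  imports Defs
begin

text \<open>At the first time \<open>T\<^sub>x\<close> at which \<open>B\<^sup>\<mu>\<close> reaches level \<open>x\<close>, the path is at its running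
  maximum and above both initial values, so both ratchets equal \<open>B\<^sup>\<mu>\<close> there and
  \<open>T\<^sub>c\<^sub>o\<^sub>u\<^sub>p\<^sub>l \<le> T\<^sub>x\<close> pathwise.
  With \<open>\<theta> = \<mu> - sqrt (\<mu>\<^sup>2 - 2\<alpha>)\<close>, the root of \<open>\<alpha> - \<theta>\<mu> + \<theta>\<^sup>2/2 = 0\<close>, the process
  \<open>exp (\<alpha>t - \<theta>B\<^sup>\<mu>\<^sub>t)\<close> is a martingale, and optional stopping at \<open>T\<^sub>x\<close> gives
  \<open>E[exp (\<alpha>T\<^sub>x)] \<le> exp (\<theta>x)\<close>. Optional stopping is an exact computation with independent
  Gaussian increments for the passage time on a grid of mesh \<open>h\<close>, capped at a deterministic
  time; the bound for \<open>T\<^sub>x\<close> follows by Fatou's lemma as \<open>h \<rightarrow> 0\<close> and the cap tends to infinity.\<close>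

section \<open>The ratchet at a running maximum\<close>

definition locally_finite_config :: "(real \<times> real) set \<Rightarrow> bool" where
  "locally_finite_config P \<longleftrightarrow> (\<forall>R. finite {p \<in> P. \<bar>fst p\<bar> \<le> R \<and> snd p \<le> R})"

lemma continuous_on_Icc_abs_bounded:
  fixes f :: "real \<Rightarrow> real"
  assumes "continuous_on {a..b} f"
  obtains R where "\<And>s. a \<le> s \<Longrightarrow> s \<le> b \<Longrightarrow> \<bar>f s\<bar> \<le> R"
proof -
  obtain R where R: "\<And>y. y \<in> f ` {a..b} \<Longrightarrow> norm y \<le> R"
    using compact_imp_bounded[OF compact_continuous_image[OF assms compact_Icc]] bounded_iff
    by metis
  show ?thesis
    by (rule that[of R]) (use R in force)
qed

text \<open>The set \<open>hits\<close> of \<open>rat_data\<close> for an event at time \<open>r\<close> with new value \<open>y\<close>.\<close>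

definition ratchet_hits :: "(real \<Rightarrow> real) \<Rightarrow> (real \<times> real) set \<Rightarrow> real \<Rightarrow> real \<Rightarrow> real set" where
  "ratchet_hits b P r y =
     {t. r < t \<and> (\<exists>z. (z, t) \<in> P \<and> b t \<le> z \<and> z \<le> max y (Sup (b ` {r..t})))}"

lemma ratchet_hits_Inf_attained:
  fixes b :: "real \<Rightarrow> real"
  assumes cont: "continuous_on {0..} b" and lf: "locally_finite_config P" and r: "0 \<le> r"
    and ne: "ratchet_hits b P r y \<noteq> {}"
  obtains t where "t \<in> ratchet_hits b P r y" "Inf (ereal ` ratchet_hits b P r y) = ereal t"
proof -
  let ?H = "ratchet_hits b P r y"
  obtain t0 where t0: "t0 \<in> ?H" using ne by auto
  then have "r < t0" unfolding ratchet_hits_def by auto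
  have "continuous_on {0..t0} b" using cont by (rule continuous_on_subset) auto
  then obtain R0 where R0: "\<And>s. 0 \<le> s \<Longrightarrow> s \<le> t0 \<Longrightarrow> \<bar>b s\<bar> \<le> R0"
    using continuous_on_Icc_abs_bounded by blast
  define R where "R = max (max \<bar>y\<bar> R0) t0"
  \<comment> \<open>hits up to \<open>t0\<close> are time coordinates of points of \<open>P\<close> in a bounded box\<close>
  have "?H \<inter> {..t0} \<subseteq> snd ` {p \<in> P. \<bar>fst p\<bar> \<le> R \<and> snd p \<le> R}"
  proof
    fix t assume "t \<in> ?H \<inter> {..t0}"
    then obtain z where z: "(z, t) \<in> P" "b t \<le> z" "z \<le> max y (Sup (b ` {r..t}))"
      and rt: "r < t" "t \<le> t0"
      unfolding ratchet_hits_def by auto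
    have "Sup (b ` {r..t}) \<le> R0"
      by (rule cSup_least) (use rt r R0 in \<open>auto simp: abs_le_iff\<close>)
    moreover have "\<bar>b t\<bar> \<le> R0" using R0 rt r by auto
    ultimately have "\<bar>z\<bar> \<le> R" "t \<le> R" using z rt unfolding R_def by (auto simp: abs_le_iff)
    then show "t \<in> snd ` {p \<in> P. \<bar>fst p\<bar> \<le> R \<and> snd p \<le> R}"
      using z(1) by (auto intro!: image_eqI[of _ _ "(z, t)"])
  qed
  then have fin: "finite (?H \<inter> {..t0})"
    using finite_subset lf unfolding locally_finite_config_def by blast
  define m where "m = Min (?H \<inter> {..t0})"
  have mH: "m \<in> ?H" and "m \<le> t0"
    using Min_in[OF fin] t0 unfolding m_def by auto
  then have "m \<le> t" if "t \<in> ?H" for t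
    using Min_le[OF fin] that unfolding m_def by (cases "t \<le> t0") auto
  then have "Inf (ereal ` ?H) = ereal m"
    by (intro antisym) (auto intro!: Inf_lower Inf_greatest mH)
  with mH show ?thesis by (rule that)
qed

lemma rat_data_Suc_cases:
  fixes b :: "real \<Rightarrow> real"
  assumes cont: "continuous_on {0..} b" and lf: "locally_finite_config P" and r: "0 \<le> r"
    and D: "rat_data b P s0 n = (ereal r, y)"
  shows "rat_data b P s0 (Suc n) = (\<infinity>, y) \<or>
     (\<exists>r' z. rat_data b P s0 (Suc n) = (ereal r', z) \<and> r < r' \<and> (z, r') \<in> P \<and> b r' \<le> z
        \<and> z \<le> max y (Sup (b ` {r..r'})))"
proof -
  let ?H = "ratchet_hits b P r y"
  have eq: "rat_data b P s0 (Suc n) = (if Inf (ereal ` ?H) = \<infinity> then (\<infinity>, y)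
      else (Inf (ereal ` ?H), SOME z. (z, real_of_ereal (Inf (ereal ` ?H))) \<in> P
              \<and> b (real_of_ereal (Inf (ereal ` ?H))) \<le> z
              \<and> z \<le> max y (Sup (b ` {r..real_of_ereal (Inf (ereal ` ?H))}))))"
    using D unfolding ratchet_hits_def by (simp add: Let_def)
  show ?thesis
  proof (cases "Inf (ereal ` ?H) = \<infinity>")
    case True
    then show ?thesis using eq by simp
  next
    case False
    then have "?H \<noteq> {}" by (auto simp: top_ereal_def)
    then obtain t where t: "t \<in> ?H" "Inf (ereal ` ?H) = ereal t"
      by (rule ratchet_hits_Inf_attained[OF cont lf r])
    then have "\<exists>z. (z, t) \<in> P \<and> b t \<le> z \<and> z \<le> max y (Sup (b ` {r..t}))"
      unfolding ratchet_hits_def by auto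
    from someI_ex[OF this] t eq show ?thesis
      unfolding ratchet_hits_def by auto
  qed
qed

lemma rat_data_time_cases:
  fixes b :: "real \<Rightarrow> real"
  assumes cont: "continuous_on {0..} b" and lf: "locally_finite_config P"
  shows "fst (rat_data b P s0 n) = \<infinity> \<or> (\<exists>r\<ge>0. fst (rat_data b P s0 n) = ereal r)"
proof (induction n)
  case 0
  then show ?case by auto
next
  case (Suc n)
  obtain \<tau> y where D: "rat_data b P s0 n = (\<tau>, y)" by fastforce
  show ?case
  proof (cases "\<tau> = \<infinity>")
    case True
    then show ?thesis using D by simp
  next
    case False
    then obtain r where "r \<ge> 0" "\<tau> = ereal r" using Suc D by auto
    with rat_data_Suc_cases[OF cont lf, of r s0 n y] D show ?thesis by auto
  qed
qed

lemma rat_data_time_less: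
  fixes b :: "real \<Rightarrow> real"
  assumes cont: "continuous_on {0..} b" and lf: "locally_finite_config P"
  shows "n < m \<Longrightarrow> fst (rat_data b P s0 m) \<noteq> \<infinity> \<Longrightarrow>
    fst (rat_data b P s0 n) < fst (rat_data b P s0 m)"
proof (induction m)
  case 0
  then show ?case by simp
next
  case (Suc m)
  obtain \<tau> y where D: "rat_data b P s0 m = (\<tau>, y)" by fastforce
  have "\<tau> \<noteq> \<infinity>" using Suc.prems D by auto
  then obtain r where "r \<ge> 0" "\<tau> = ereal r"
    using rat_data_time_cases[OF cont lf, of s0 m] D by auto
  with rat_data_Suc_cases[OF cont lf, of r s0 m y] D Suc.prems
  have "fst (rat_data b P s0 m) < fst (rat_data b P s0 (Suc m))" by auto
  with Suc show ?case using D \<open>\<tau> \<noteq> \<infinity>\<close> by (cases "n = m") auto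
qed

lemma inj_on_rat_data_time:
  fixes b :: "real \<Rightarrow> real"
  assumes cont: "continuous_on {0..} b" and lf: "locally_finite_config P"
  shows "inj_on (\<lambda>n. fst (rat_data b P s0 n)) {n. fst (rat_data b P s0 n) \<noteq> \<infinity>}"
proof (rule inj_onI)
  fix n m
  assume "n \<in> {n. fst (rat_data b P s0 n) \<noteq> \<infinity>}" "m \<in> {n. fst (rat_data b P s0 n) \<noteq> \<infinity>}"
    and "fst (rat_data b P s0 n) = fst (rat_data b P s0 m)"
  then show "n = m"
    using rat_data_time_less[OF cont lf, of n m s0] rat_data_time_less[OF cont lf, of m n s0]
    by (cases n m rule: linorder_cases) auto
qed

lemma rat_data_value_le:
  fixes b :: "real \<Rightarrow> real"
  assumes cont: "continuous_on {0..} b" and lf: "locally_finite_config P"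
    and s0: "s0 \<le> c" and bc: "\<And>r. 0 \<le> r \<Longrightarrow> r \<le> T \<Longrightarrow> b r \<le> c"
  shows "fst (rat_data b P s0 n) \<le> ereal T \<Longrightarrow> snd (rat_data b P s0 n) \<le> c"
proof (induction n)
  case 0
  then show ?case using s0 by simp
next
  case (Suc n)
  obtain \<tau> y where D: "rat_data b P s0 n = (\<tau>, y)" by fastforce
  have "\<tau> \<noteq> \<infinity>" using Suc.prems D by auto
  then obtain r where r: "r \<ge> 0" "\<tau> = ereal r"
    using rat_data_time_cases[OF cont lf, of s0 n] D by auto
  with rat_data_Suc_cases[OF cont lf, of r s0 n y] D Suc.prems
  obtain r' z where rz: "rat_data b P s0 (Suc n) = (ereal r', z)" "r < r'" "r' \<le> T"
      "z \<le> max y (Sup (b ` {r..r'}))"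
    by auto
  have "y \<le> c" using Suc.IH D r rz by simp
  moreover have "Sup (b ` {r..r'}) \<le> c"
    by (rule cSup_least) (use r rz bc in auto)
  ultimately show ?case using rz by simp
qed

lemma finite_rat_data_before:
  fixes b :: "real \<Rightarrow> real"
  assumes cont: "continuous_on {0..} b" and lf: "locally_finite_config P" and T: "0 \<le> T"
  shows "finite {n. fst (rat_data b P s0 n) \<le> ereal T}"
proof -
  let ?D = "rat_data b P s0"
  let ?S = "{n. fst (?D n) \<le> ereal T}"
  have "continuous_on {0..T} b" using cont by (rule continuous_on_subset) auto
  then obtain R0 where R0: "\<And>s. 0 \<le> s \<Longrightarrow> s \<le> T \<Longrightarrow> \<bar>b s\<bar> \<le> R0"
    using continuous_on_Icc_abs_bounded by blast
  define c where "c = max s0 R0"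
  define R where "R = max (max \<bar>c\<bar> R0) T"
  let ?Box = "{p \<in> P. \<bar>fst p\<bar> \<le> R \<and> snd p \<le> R}"
  \<comment> \<open>event times up to \<open>T\<close> are distinct time coordinates of points in a bounded box\<close>
  have s0c: "s0 \<le> c" unfolding c_def by simp
  have bc: "b r \<le> c" if "0 \<le> r" "r \<le> T" for r
    using R0[OF that] unfolding c_def by auto
  have "fst ` ?D ` ?S \<subseteq> insert 0 (ereal ` snd ` ?Box)"
  proof
    fix e assume "e \<in> fst ` ?D ` ?S"
    then obtain n where n: "fst (?D n) \<le> ereal T" "e = fst (?D n)" by auto
    show "e \<in> insert 0 (ereal ` snd ` ?Box)"
    proof (cases n)
      case 0
      then show ?thesis using n by simp
    next
      case (Suc k)
      obtain \<tau> y where D: "?D k = (\<tau>, y)" by fastforce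
      have "\<tau> \<noteq> \<infinity>" using n Suc D by auto
      then obtain r where r: "r \<ge> 0" "\<tau> = ereal r"
        using rat_data_time_cases[OF cont lf, of s0 k] D by auto
      with rat_data_Suc_cases[OF cont lf, of r s0 k y] D n Suc
      obtain r' z where rz: "?D (Suc k) = (ereal r', z)" "r < r'" "r' \<le> T" "(z, r') \<in> P"
          "b r' \<le> z"
        by auto
      have "z \<le> c"
        using rat_data_value_le[OF cont lf s0c bc, where n = "Suc k"] rz(1,3) by simp
      have "\<bar>b r'\<bar> \<le> R0" using R0 r rz by auto
      then have "\<bar>z\<bar> \<le> R" "r' \<le> R" using rz \<open>z \<le> c\<close> unfolding R_def by (auto simp: abs_le_iff)
      then show ?thesis using n Suc rz
        by (auto intro!: image_eqI[of _ _ "(z, r')"])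
    qed
  qed
  moreover have "finite ?Box" using lf unfolding locally_finite_config_def by auto
  ultimately have "finite ((\<lambda>n. fst (?D n)) ` ?S)"
    unfolding image_image[symmetric] by (meson finite_imageI finite_insert finite_subset)
  moreover have "inj_on (\<lambda>n. fst (?D n)) ?S"
    by (rule inj_on_subset[OF inj_on_rat_data_time[OF cont lf]]) auto
  ultimately show ?thesis using finite_imageD by blast
qed

lemma ratchet_S_at_running_max:
  fixes b :: "real \<Rightarrow> real"
  assumes cont: "continuous_on {0..} b" and lf: "locally_finite_config P"
    and T: "0 \<le> T" and s0: "s0 \<le> b T" and mx: "\<And>r. 0 \<le> r \<Longrightarrow> r \<le> T \<Longrightarrow> b r \<le> b T"
  shows "ratchet_S b P s0 T = b T"
proof -
  let ?D = "rat_data b P s0"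
  let ?S = "{n. fst (?D n) \<le> ereal T}"
  have fin: "finite ?S" by (rule finite_rat_data_before[OF cont lf T])
  define m where "m = (GREATEST n. fst (?D n) \<le> ereal T)"
  have "fst (?D m) \<le> ereal T"
    unfolding m_def using GreatestI_nat[of "\<lambda>n. n \<in> ?S" 0 "Max ?S"] fin T by auto
  moreover obtain \<tau> y where Dm: "?D m = (\<tau>, y)" by fastforce
  ultimately obtain r where r: "r \<ge> 0" "\<tau> = ereal r" "r \<le> T"
    using rat_data_time_cases[OF cont lf, of s0 m] by auto
  have "y \<le> b T"
    using rat_data_value_le[OF cont lf s0 mx, where n = m] Dm r by simp
  moreover have "Sup (b ` {r..T}) = b T"
    by (rule cSup_eq_maximum) (use r mx in auto)
  ultimately show ?thesis
    unfolding ratchet_S_def Let_def m_def[symmetric] using Dm r by simp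
qed

lemma coupl_time_le_running_max:
  fixes b :: "real \<Rightarrow> real"
  assumes cont: "continuous_on {0..} b" and lf: "locally_finite_config P"
    and T: "0 \<le> T" and x: "x' \<le> x" "x \<le> b T" and mx: "\<And>r. 0 \<le> r \<Longrightarrow> r \<le> T \<Longrightarrow> b r \<le> b T"
  shows "coupl_time (ratchet_S b P x) (ratchet_S b P x') \<le> ereal T"
proof -
  have "ratchet_S b P x T = ratchet_S b P x' T"
    using ratchet_S_at_running_max[OF cont lf T _ mx] x by simp
  then show ?thesis unfolding coupl_time_def using T by (auto intro: Inf_lower)
qed

lemma coupl_time_nonneg: "coupl_time S S' \<ge> 0"
  unfolding coupl_time_def by (auto intro!: Inf_greatest)

section \<open>Optional stopping on a grid\<close>

definition grid_passage :: "(real \<Rightarrow> real) \<Rightarrow> real \<Rightarrow> real \<Rightarrow> nat \<Rightarrow> nat" where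
  "grid_passage b x h K = (LEAST k. k = K \<or> x \<le> b (real k * h))"

definition stopped_exp :: "real \<Rightarrow> real \<Rightarrow> (real \<Rightarrow> real) \<Rightarrow> real \<Rightarrow> real \<Rightarrow> nat \<Rightarrow> ennreal" where
  "stopped_exp \<alpha> \<theta> b x h K =
     (let s = real (grid_passage b x h K) * h in ennreal (exp (\<alpha> * s - \<theta> * b s)))"

lemma grid_passage_le: "grid_passage b x h K \<le> K"
  unfolding grid_passage_def by (rule Least_le) simp

lemma grid_passage_le_hit: "x \<le> b (real j * h) \<Longrightarrow> grid_passage b x h K \<le> j"
  unfolding grid_passage_def by (rule Least_le) simp

lemma grid_passage_cases: "grid_passage b x h K = K \<or> x \<le> b (real (grid_passage b x h K) * h)"
  unfolding grid_passage_def by (rule LeastI[of _ K]) simp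

lemma less_grid_passage:
  assumes "j < grid_passage b x h K"
  shows "b (real j * h) < x"
  using not_less_Least[OF assms[unfolded grid_passage_def]] by auto

lemma grid_passage_eq_bound:
  assumes "\<forall>j<K. b (real j * h) < x"
  shows "grid_passage b x h K = K"
  unfolding grid_passage_def
proof (rule Least_equality)
  show "K \<le> y" if "y = K \<or> x \<le> b (real y * h)" for y
  proof (rule ccontr)
    assume "\<not> K \<le> y"
    then have "b (real y * h) < x" using assms by simp
    with that \<open>\<not> K \<le> y\<close> show False by auto
  qed
qed simp

lemma grid_passage_Suc:
  "grid_passage b x h (Suc k) =
    (if \<forall>j\<le>k. b (real j * h) < x then Suc k else grid_passage b x h k)"
proof (cases "\<forall>j\<le>k. b (real j * h) < x")
  case True
  then show ?thesis by (simp add: grid_passage_eq_bound less_Suc_eq_le)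
next
  case False
  then obtain j0 where j0: "j0 \<le> k" "x \<le> b (real j0 * h)" by (auto simp: not_less)
  then have "grid_passage b x h k \<le> j0" by (intro grid_passage_le_hit)
  then have hit: "x \<le> b (real (grid_passage b x h k) * h)"
    using grid_passage_cases[of b x h k] j0 by auto
  have "grid_passage b x h (Suc k) = grid_passage b x h k"
    unfolding grid_passage_def[of b x h "Suc k"]
  proof (rule Least_equality)
    show "y = Suc k \<or> x \<le> b (real y * h) \<Longrightarrow> grid_passage b x h k \<le> y" for y
      using grid_passage_le[of b x h k] grid_passage_le_hit[of x b y h k] by auto
  qed (use hit in simp)
  then show ?thesis by (simp only: if_not_P[OF False])
qed

lemma stopped_exp_Suc:
  "stopped_exp \<alpha> \<theta> b x h (Suc k) =
    (if \<forall>j\<le>k. b (real j * h) < x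
     then stopped_exp \<alpha> \<theta> b x h k
       * ennreal (exp (\<alpha> * h - \<theta> * (b (real (Suc k) * h) - b (real k * h))))
     else stopped_exp \<alpha> \<theta> b x h k)"
proof (cases "\<forall>j\<le>k. b (real j * h) < x")
  case True
  then have "grid_passage b x h k = k" by (simp add: grid_passage_eq_bound)
  with True show ?thesis
    by (simp add: stopped_exp_def grid_passage_Suc Let_def ennreal_mult'[symmetric]
        exp_add[symmetric] algebra_simps)
next
  case False
  then show ?thesis by (simp only: stopped_exp_def grid_passage_Suc if_not_P[OF False] if_False)
qed

lemma measurable_stopped_exp:
  assumes [measurable]: "\<And>t. B t \<in> borel_measurable M"
  shows "(\<lambda>\<omega>. stopped_exp \<alpha> \<theta> (\<lambda>t. B t \<omega> + \<mu> * t) x h K) \<in> borel_measurable M"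
proof -
  have "(\<lambda>\<omega>. grid_passage (\<lambda>t. B t \<omega> + \<mu> * t) x h K) \<in> measurable M (count_space UNIV)"
    unfolding grid_passage_def by measurable
  then have "(\<lambda>\<omega>. (\<lambda>k \<omega>. ennreal (exp (\<alpha> * (real k * h) - \<theta> * (B (real k * h) \<omega> + \<mu> * (real k * h)))))
      (grid_passage (\<lambda>t. B t \<omega> + \<mu> * t) x h K) \<omega>) \<in> borel_measurable M"
    by (rule measurable_compose_countable[rotated]) measurable
  then show ?thesis by (simp add: stopped_exp_def Let_def)
qed

lemma std_BM_grid_increments_indep:
  assumes bm: "std_BM M B" and h: "h > 0"
  shows "prob_space.indep_vars M (\<lambda>_. borel)
    (\<lambda>i \<omega>. B (real (Suc i) * h) \<omega> - B (real i * h) \<omega>) {..<K}"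
proof -
  define ts where "ts = map (\<lambda>j. real j * h) [0..<Suc K]"
  have "sorted_wrt (<) ts"
    unfolding ts_def sorted_wrt_map using h
    by (auto simp: sorted_wrt_iff_nth_less nth_upt simp del: upt_Suc)
  moreover have "\<forall>t\<in>set ts. 0 \<le> t" unfolding ts_def using h by auto
  ultimately have "prob_space.indep_vars M (\<lambda>_. borel)
      (\<lambda>i \<omega>. B (ts ! Suc i) \<omega> - B (ts ! i) \<omega>) {..<length ts - 1}"
    using bm unfolding std_BM_def by blast
  moreover have "length ts - 1 = K" unfolding ts_def by simp
  moreover have "ts ! i = real i * h" if "i \<le> K" for i
    unfolding ts_def using that by (simp del: upt_Suc add: nth_map)
  ultimately show ?thesis
    using bm unfolding std_BM_def
    by (subst prob_space.indep_vars_cong[where Y="\<lambda>i \<omega>. B (ts ! Suc i) \<omega> - B (ts ! i) \<omega>"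
          and J="{..<K}" and M'="\<lambda>_. borel"]) auto
qed

lemma (in prob_space) indep_var_nn_integral_mult:
  fixes f g :: "'a \<Rightarrow> ennreal"
  assumes "indep_var borel f borel g"
  shows "(\<integral>\<^sup>+\<omega>. f \<omega> * g \<omega> \<partial>M) = (\<integral>\<^sup>+\<omega>. f \<omega> \<partial>M) * (\<integral>\<^sup>+\<omega>. g \<omega> \<partial>M)"
proof -
  have "case_bool (borel :: ennreal measure) borel = (\<lambda>_. borel)"
    by (rule ext) (simp split: bool.split)
  then have "indep_vars (\<lambda>_. borel) (case_bool f g) UNIV"
    using assms unfolding indep_var_def by simp
  then have "(\<integral>\<^sup>+\<omega>. (\<Prod>i\<in>UNIV. case_bool f g i \<omega>) \<partial>M) = (\<Prod>i\<in>UNIV. \<integral>\<^sup>+\<omega>. case_bool f g i \<omega> \<partial>M)"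
    by (rule indep_vars_nn_integral[rotated]) auto
  then show ?thesis by (simp add: UNIV_bool mult.commute)
qed

lemma measurable_PiM_component_borel:
  "(\<lambda>v. v i) \<in> borel_measurable (PiM I (\<lambda>_. (borel :: real measure)))"
proof (cases "i \<in> I")
  case True
  then show ?thesis by simp
next
  case False
  have "(\<lambda>v. undefined :: real) \<in> borel_measurable (PiM I (\<lambda>_. (borel :: real measure)))"
    by simp
  then show ?thesis
    by (rule measurable_cong[THEN iffD1, rotated])
       (use False in \<open>auto simp: space_PiM PiE_def extensional_def\<close>)
qed

lemma std_BM_grid_increments_nn_integral_mult:
  fixes \<phi> :: "(nat \<Rightarrow> real) \<Rightarrow> ennreal" and g :: "real \<Rightarrow> ennreal"
  assumes bm: "std_BM M B" and h: "h > 0"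
    and \<phi>: "\<phi> \<in> borel_measurable (PiM {..<k} (\<lambda>_. borel))" and g: "g \<in> borel_measurable borel"
  defines "X \<equiv> \<lambda>i \<omega>. B (real (Suc i) * h) \<omega> - B (real i * h) \<omega>"
  shows "(\<integral>\<^sup>+\<omega>. \<phi> (restrict (\<lambda>i. X i \<omega>) {..<k}) * g (X k \<omega>) \<partial>M)
       = (\<integral>\<^sup>+\<omega>. \<phi> (restrict (\<lambda>i. X i \<omega>) {..<k}) \<partial>M) * (\<integral>\<^sup>+\<omega>. g (X k \<omega>) \<partial>M)"
proof -
  interpret prob_space M using bm unfolding std_BM_def by auto
  have g': "(\<lambda>v. g (v k)) \<in> borel_measurable (PiM {k} (\<lambda>_. borel))"
    by (rule measurable_compose[OF measurable_PiM_component_borel g])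
  have "indep_var borel (\<phi> \<circ> (\<lambda>\<omega>. restrict (\<lambda>i. X i \<omega>) {..<k}))
      borel ((\<lambda>v. g (v k)) \<circ> (\<lambda>\<omega>. restrict (\<lambda>i. X i \<omega>) {k}))"
    by (rule indep_var_compose[OF indep_var_restrict \<phi> g'],
        rule std_BM_grid_increments_indep[OF bm h, of "Suc k", folded X_def]) auto
  from indep_var_nn_integral_mult[OF this] show ?thesis by (simp add: o_def)
qed

lemma normal_density_mgf:
  fixes \<sigma> c :: real
  assumes "\<sigma> > 0"
  shows "(\<integral>\<^sup>+v. ennreal (normal_density 0 \<sigma> v) * ennreal (exp (c * v)) \<partial>lborel)
    = ennreal (exp (c\<^sup>2 * \<sigma>\<^sup>2 / 2))"
proof -
  have tilt: "normal_density 0 \<sigma> v * exp (c * v)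
      = exp (c\<^sup>2 * \<sigma>\<^sup>2 / 2) * normal_density (c * \<sigma>\<^sup>2) \<sigma> v" for v
  proof -
    have "- ((v - 0)\<^sup>2 / (2 * \<sigma>\<^sup>2)) + c * v = c\<^sup>2 * \<sigma>\<^sup>2 / 2 + - ((v - c * \<sigma>\<^sup>2)\<^sup>2 / (2 * \<sigma>\<^sup>2))"
      using assms by (simp add: field_simps power2_eq_square)
    then show ?thesis
      unfolding normal_density_def by (simp add: exp_add[symmetric] mult.commute mult.left_commute)
  qed
  have "(\<integral>\<^sup>+v. ennreal (normal_density 0 \<sigma> v) * ennreal (exp (c * v)) \<partial>lborel)
      = (\<integral>\<^sup>+v. ennreal (exp (c\<^sup>2 * \<sigma>\<^sup>2 / 2)) * ennreal (normal_density (c * \<sigma>\<^sup>2) \<sigma> v) \<partial>lborel)"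
    by (intro nn_integral_cong) (simp add: ennreal_mult'[symmetric] tilt)
  also have "\<dots> = ennreal (exp (c\<^sup>2 * \<sigma>\<^sup>2 / 2))
      * (\<integral>\<^sup>+v. ennreal (normal_density (c * \<sigma>\<^sup>2) \<sigma> v) \<partial>lborel)"
    by (rule nn_integral_cmult) simp
  also have "(\<integral>\<^sup>+v. ennreal (normal_density (c * \<sigma>\<^sup>2) \<sigma> v) \<partial>lborel) = 1"
  proof -
    interpret prob_space "density lborel (normal_density (c * \<sigma>\<^sup>2) \<sigma>)"
      using prob_space_normal_density[OF assms] .
    show ?thesis using emeasure_space_1 by (simp add: emeasure_density)
  qed
  finally show ?thesis by simp
qed

lemma std_BM_increment_exp_moment:
  assumes bm: "std_BM M B" and st: "0 \<le> s" "s < t"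
  shows "(\<integral>\<^sup>+\<omega>. ennreal (exp (c * (B t \<omega> - B s \<omega>))) \<partial>M) = ennreal (exp (c\<^sup>2 * (t - s) / 2))"
proof -
  have [measurable]: "\<And>t. B t \<in> borel_measurable M" using bm unfolding std_BM_def by auto
  have "distributed M lborel (\<lambda>\<omega>. B t \<omega> - B s \<omega>)
      (\<lambda>v. ennreal (normal_density 0 (sqrt (t - s)) v))"
    using bm st unfolding std_BM_def by blast
  then have "(\<integral>\<^sup>+\<omega>. ennreal (exp (c * (B t \<omega> - B s \<omega>))) \<partial>M)
      = (\<integral>\<^sup>+v. ennreal (normal_density 0 (sqrt (t - s)) v) * ennreal (exp (c * v)) \<partial>lborel)"
    by (rule distributed_nn_integral[symmetric]) measurable
  also have "\<dots> = ennreal (exp (c\<^sup>2 * (sqrt (t - s))\<^sup>2 / 2))"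
    using st by (intro normal_density_mgf) simp
  finally show ?thesis using st by simp
qed

lemma std_BM_exp_martingale_increment:
  assumes bm: "std_BM M B" and st: "0 \<le> s" "s < t" and root: "\<alpha> - \<theta> * \<mu> + \<theta>\<^sup>2 / 2 = 0"
  shows "(\<integral>\<^sup>+\<omega>. ennreal (exp (\<alpha> * (t - s) - \<theta> * (B t \<omega> - B s \<omega> + \<mu> * (t - s)))) \<partial>M) = 1"
proof -
  have [measurable]: "\<And>t. B t \<in> borel_measurable M" using bm unfolding std_BM_def by auto
  define c where "c = exp (\<alpha> * (t - s) - \<theta> * \<mu> * (t - s))"
  have "(\<integral>\<^sup>+\<omega>. ennreal (exp (\<alpha> * (t - s) - \<theta> * (B t \<omega> - B s \<omega> + \<mu> * (t - s)))) \<partial>M)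
      = (\<integral>\<^sup>+\<omega>. ennreal c * ennreal (exp (- \<theta> * (B t \<omega> - B s \<omega>))) \<partial>M)"
    by (intro nn_integral_cong)
       (simp add: c_def ennreal_mult'[symmetric] exp_add[symmetric] algebra_simps)
  also have "\<dots> = ennreal c * (\<integral>\<^sup>+\<omega>. ennreal (exp (- \<theta> * (B t \<omega> - B s \<omega>))) \<partial>M)"
    by (rule nn_integral_cmult) simp
  also have "\<dots> = ennreal c * ennreal (exp ((- \<theta>)\<^sup>2 * (t - s) / 2))"
    by (simp only: std_BM_increment_exp_moment[OF bm st])
  also have "\<dots> = ennreal (exp ((t - s) * (\<alpha> - \<theta> * \<mu> + \<theta>\<^sup>2 / 2)))"
    by (simp add: c_def ennreal_mult'[symmetric] exp_add[symmetric] algebra_simps)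
  finally show ?thesis using root by simp
qed

lemma std_BM_unstopped_nn_integral_mult:
  fixes \<alpha> \<theta> \<mu> h x :: real and K :: nat and g :: "real \<Rightarrow> ennreal"
  assumes bm: "std_BM M B" and h: "h > 0" and g: "g \<in> borel_measurable borel"
  defines "H \<equiv> \<lambda>\<omega>. if \<forall>j\<le>K. B (real j * h) \<omega> + \<mu> * (real j * h) < x
    then ennreal (exp (\<alpha> * (real K * h) - \<theta> * (B (real K * h) \<omega> + \<mu> * (real K * h)))) else 0"
  shows "(\<integral>\<^sup>+\<omega>. H \<omega> * g (B (real (Suc K) * h) \<omega> - B (real K * h) \<omega>) \<partial>M)
    = (\<integral>\<^sup>+\<omega>. H \<omega> \<partial>M) * (\<integral>\<^sup>+\<omega>. g (B (real (Suc K) * h) \<omega> - B (real K * h) \<omega>) \<partial>M)"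
proof -
  define X where "X i \<omega> = B (real (Suc i) * h) \<omega> - B (real i * h) \<omega>" for i \<omega>
  define \<phi> where "\<phi> v = (if \<forall>j\<le>K. (\<Sum>i<j. v i) + \<mu> * (real j * h) < x
      then ennreal (exp (\<alpha> * (real K * h) - \<theta> * ((\<Sum>i<K. v i) + \<mu> * (real K * h)))) else 0)"
    for v :: "nat \<Rightarrow> real"
  have \<phi>_measurable: "\<phi> \<in> borel_measurable (PiM {..<K} (\<lambda>_. borel))"
  proof -
    have [measurable]: "(\<lambda>v. \<Sum>i<j. v i) \<in> borel_measurable (PiM {..<K} (\<lambda>_. (borel :: real measure)))"
      for j by (intro borel_measurable_sum measurable_PiM_component_borel)
    show ?thesis unfolding \<phi>_def by measurable
  qed
  have "H \<omega> = \<phi> (restrict (\<lambda>i. X i \<omega>) {..<K})" if "\<omega> \<in> space M" for \<omega>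
  proof -
    have "B 0 \<omega> = 0" using bm that unfolding std_BM_def by auto
    then have "(\<Sum>i<j. restrict (\<lambda>i. X i \<omega>) {..<K} i) = B (real j * h) \<omega>" if "j \<le> K" for j
      using sum_lessThan_telescope[of "\<lambda>i. B (real i * h) \<omega>" j] that by (simp add: X_def)
    then show ?thesis unfolding H_def \<phi>_def by (simp cong: conj_cong)
  qed
  then show ?thesis
    using std_BM_grid_increments_nn_integral_mult[OF bm h \<phi>_measurable g]
    by (simp add: X_def cong: nn_integral_cong)
qed

lemma std_BM_stopped_exp_Suc:
  fixes \<alpha> \<theta> \<mu> h x :: real and K :: nat
  assumes bm: "std_BM M B" and h: "h > 0" and root: "\<alpha> - \<theta> * \<mu> + \<theta>\<^sup>2 / 2 = 0"
  shows "(\<integral>\<^sup>+\<omega>. stopped_exp \<alpha> \<theta> (\<lambda>t. B t \<omega> + \<mu> * t) x h (Suc K) \<partial>M)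
    = (\<integral>\<^sup>+\<omega>. stopped_exp \<alpha> \<theta> (\<lambda>t. B t \<omega> + \<mu> * t) x h K \<partial>M)"
proof -
  have [measurable]: "\<And>t. B t \<in> borel_measurable M" using bm unfolding std_BM_def by auto
  define S where "S \<omega> = stopped_exp \<alpha> \<theta> (\<lambda>t. B t \<omega> + \<mu> * t) x h K" for \<omega>
  define alive where "alive \<omega> \<longleftrightarrow> (\<forall>j\<le>K. B (real j * h) \<omega> + \<mu> * (real j * h) < x)" for \<omega>
  define H where "H \<omega> = (if alive \<omega> then S \<omega> else 0)" for \<omega>
  define g where "g v = ennreal (exp (\<alpha> * h - \<theta> * (v + \<mu> * h)))" for v
  have [measurable]: "S \<in> borel_measurable M"
    unfolding S_def by (rule measurable_stopped_exp) measurable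
  have [measurable]: "Measurable.pred M alive" unfolding alive_def by measurable
  have g_measurable[measurable]: "g \<in> borel_measurable borel" unfolding g_def by measurable
  have [measurable]: "H \<in> borel_measurable M" unfolding H_def by measurable
  have "(\<integral>\<^sup>+\<omega>. H \<omega> * g (B (real (Suc K) * h) \<omega> - B (real K * h) \<omega>) \<partial>M)
      = (\<integral>\<^sup>+\<omega>. H \<omega> \<partial>M) * (\<integral>\<^sup>+\<omega>. g (B (real (Suc K) * h) \<omega> - B (real K * h) \<omega>) \<partial>M)"
    using std_BM_unstopped_nn_integral_mult[OF bm h g_measurable, where K = K and \<mu> = \<mu> and x = x and \<alpha> = \<alpha> and \<theta> = \<theta>]
    by (simp add: H_def S_def alive_def stopped_exp_def grid_passage_eq_bound Let_def
        cong: if_cong)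
  also have "(\<integral>\<^sup>+\<omega>. g (B (real (Suc K) * h) \<omega> - B (real K * h) \<omega>) \<partial>M) = 1"
    using std_BM_exp_martingale_increment[OF bm _ _ root, of "real K * h" "real (Suc K) * h"] h
    by (simp add: g_def algebra_simps)
  finally have prod: "(\<integral>\<^sup>+\<omega>. H \<omega> * g (B (real (Suc K) * h) \<omega> - B (real K * h) \<omega>) \<partial>M)
      = (\<integral>\<^sup>+\<omega>. H \<omega> \<partial>M)" by simp
  have dec: "stopped_exp \<alpha> \<theta> (\<lambda>t. B t \<omega> + \<mu> * t) x h (Suc K)
      = (if alive \<omega> then 0 else S \<omega>) + H \<omega> * g (B (real (Suc K) * h) \<omega> - B (real K * h) \<omega>)"
    "S \<omega> = (if alive \<omega> then 0 else S \<omega>) + H \<omega>" for \<omega>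
    using stopped_exp_Suc[of \<alpha> \<theta> "\<lambda>t. B t \<omega> + \<mu> * t" x h K, folded alive_def]
    by (simp_all add: S_def H_def g_def algebra_simps)
  have "(\<integral>\<^sup>+\<omega>. stopped_exp \<alpha> \<theta> (\<lambda>t. B t \<omega> + \<mu> * t) x h (Suc K) \<partial>M)
      = (\<integral>\<^sup>+\<omega>. (if alive \<omega> then 0 else S \<omega>)
          + H \<omega> * g (B (real (Suc K) * h) \<omega> - B (real K * h) \<omega>) \<partial>M)"
    using dec by simp
  also have "\<dots> = (\<integral>\<^sup>+\<omega>. (if alive \<omega> then 0 else S \<omega>) \<partial>M)
      + (\<integral>\<^sup>+\<omega>. H \<omega> * g (B (real (Suc K) * h) \<omega> - B (real K * h) \<omega>) \<partial>M)"
    by (rule nn_integral_add) measurable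
  also have "\<dots> = (\<integral>\<^sup>+\<omega>. (if alive \<omega> then 0 else S \<omega>) \<partial>M) + (\<integral>\<^sup>+\<omega>. H \<omega> \<partial>M)"
    by (simp only: prod)
  also have "\<dots> = (\<integral>\<^sup>+\<omega>. (if alive \<omega> then 0 else S \<omega>) + H \<omega> \<partial>M)"
    by (rule nn_integral_add[symmetric]) measurable
  also have "\<dots> = (\<integral>\<^sup>+\<omega>. S \<omega> \<partial>M)" using dec by simp
  finally show ?thesis unfolding S_def .
qed

lemma std_BM_stopped_exp_martingale:
  fixes \<alpha> \<theta> \<mu> h x :: real and K :: nat
  assumes bm: "std_BM M B" and h: "h > 0" and root: "\<alpha> - \<theta> * \<mu> + \<theta>\<^sup>2 / 2 = 0"
  shows "(\<integral>\<^sup>+\<omega>. stopped_exp \<alpha> \<theta> (\<lambda>t. B t \<omega> + \<mu> * t) x h K \<partial>M) = 1"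
proof (induction K)
  case 0
  interpret prob_space M using bm unfolding std_BM_def by auto
  have "stopped_exp \<alpha> \<theta> (\<lambda>t. B t \<omega> + \<mu> * t) x h 0 = 1" if "\<omega> \<in> space M" for \<omega>
    using bm that unfolding std_BM_def by (simp add: stopped_exp_def grid_passage_eq_bound)
  then show ?case using emeasure_space_1 by (simp cong: nn_integral_cong)
next
  case (Suc K)
  then show ?case using std_BM_stopped_exp_Suc[OF bm h root] by simp
qed

section \<open>Passage to the continuum\<close>

lemma stopped_exp_exponent_lower:
  fixes b :: "real \<Rightarrow> real"
  assumes b0: "b 0 = 0" and x: "0 \<le> x" and \<alpha>: "0 \<le> \<alpha>" and \<theta>: "0 \<le> \<theta>" and h: "0 < h"
    and Ts: "0 \<le> Ts" "Ts \<le> real K * h" and hit: "\<And>s. 0 \<le> s \<Longrightarrow> x \<le> b s \<Longrightarrow> Ts \<le> s"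
    and osc: "\<And>s s'. s \<in> {0..real K * h} \<Longrightarrow> s' \<in> {0..real K * h} \<Longrightarrow> dist s' s \<le> h
      \<Longrightarrow> dist (b s') (b s) < e"
  shows "ennreal (exp (\<alpha> * Ts - \<theta> * x - \<theta> * e)) \<le> stopped_exp \<alpha> \<theta> b x h K"
proof -
  define k where "k = grid_passage b x h K"
  define s where "s = real k * h"
  have "k \<le> K" unfolding k_def by (rule grid_passage_le)
  then have s: "0 \<le> s" "s \<le> real K * h" unfolding s_def using h by (auto intro: mult_right_mono)
  have "0 < e" using osc[of 0 0] Ts h by simp
  have "\<alpha> * Ts - \<theta> * x - \<theta> * e \<le> \<alpha> * s - \<theta> * b s"
  proof (cases "x \<le> b s")
    case True
    \<comment> \<open>the overshoot is small because the previous grid point is still below \<open>x\<close>\<close>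
    have "b s < x + e"
    proof (cases k)
      case 0
      then show ?thesis using b0 x \<open>0 < e\<close> unfolding s_def by simp
    next
      case (Suc j)
      have "b (real j * h) < x" using less_grid_passage[of j b x h K] Suc unfolding k_def by simp
      moreover have "dist (b s) (b (real j * h)) < e"
        using osc[of "real j * h" s] s h \<open>k \<le> K\<close> unfolding s_def Suc
        by (simp add: dist_real_def algebra_simps)
      ultimately show ?thesis by (simp add: dist_real_def)
    qed
    then have "\<theta> * b s \<le> \<theta> * (x + e)" using \<theta> by (intro mult_left_mono) auto
    moreover have "\<alpha> * Ts \<le> \<alpha> * s" using hit[OF s(1) True] \<alpha> by (rule mult_left_mono)
    ultimately show ?thesis by (simp add: algebra_simps)
  next
    case False
    then have "s = real K * h" using grid_passage_cases[of b x h K] unfolding s_def k_def by auto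
    then have "\<alpha> * Ts \<le> \<alpha> * s" using Ts \<alpha> by (simp add: mult_left_mono)
    moreover have "\<theta> * b s \<le> \<theta> * x" using False \<theta> by (intro mult_left_mono) auto
    moreover have "0 \<le> \<theta> * e" using \<theta> \<open>0 < e\<close> by simp
    ultimately show ?thesis by (simp add: algebra_simps)
  qed
  then show ?thesis unfolding stopped_exp_def Let_def k_def[symmetric] s_def[symmetric] by simp
qed

lemma stopped_exp_liminf_lower:
  fixes b :: "real \<Rightarrow> real"
  assumes cont: "continuous_on {0..} b" and b0: "b 0 = 0" and x: "0 \<le> x"
    and \<alpha>: "0 \<le> \<alpha>" and \<theta>: "0 \<le> \<theta>" and Ts: "0 \<le> Ts" "Ts \<le> real t"
    and hit: "\<And>s. 0 \<le> s \<Longrightarrow> x \<le> b s \<Longrightarrow> Ts \<le> s"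
  shows "ennreal (exp (\<alpha> * Ts - \<theta> * x))
    \<le> liminf (\<lambda>n. stopped_exp \<alpha> \<theta> b x (1 / real (Suc n)) (t * Suc n))"
proof (subst le_Liminf_iff, intro allI impI)
  fix y assume "y < ennreal (exp (\<alpha> * Ts - \<theta> * x))"
  then obtain r where r: "y = ennreal r" "0 \<le> r" "r < exp (\<alpha> * Ts - \<theta> * x)"
    by (cases y) (auto simp: ennreal_less_iff)
  have "((\<lambda>e. exp (\<alpha> * Ts - \<theta> * x - \<theta> * e)) \<longlongrightarrow> exp (\<alpha> * Ts - \<theta> * x - \<theta> * 0)) (at_right 0)"
    by (intro tendsto_intros)
  then have "\<forall>\<^sub>F e in at_right 0. r < exp (\<alpha> * Ts - \<theta> * x - \<theta> * e)"
    using r(3) by (intro order_tendstoD(1)) auto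
  then obtain e where e: "0 < e" "r < exp (\<alpha> * Ts - \<theta> * x - \<theta> * e)"
    by (metis eventually_at_right_field dense)
  have "uniformly_continuous_on {0..real t} b"
    by (rule compact_uniformly_continuous) (auto intro: continuous_on_subset[OF cont])
  then obtain d where d: "0 < d" "\<And>s s'. s \<in> {0..real t} \<Longrightarrow> s' \<in> {0..real t}
      \<Longrightarrow> dist s' s < d \<Longrightarrow> dist (b s') (b s) < e"
    unfolding uniformly_continuous_on_def using e(1) by metis
  obtain N :: nat where N: "1 / real (Suc N) < d"
    using reals_Archimedean[OF d(1)] by (metis inverse_eq_divide of_nat_Suc)
  have "y < stopped_exp \<alpha> \<theta> b x (1 / real (Suc n)) (t * Suc n)" if "N \<le> n" for n
  proof -
    have "1 / real (Suc n) \<le> 1 / real (Suc N)" using that by (simp add: frac_le)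
    with N have h: "1 / real (Suc n) < d" by simp
    have tK: "real (t * Suc n) * (1 / real (Suc n)) = real t" by (simp add: field_simps)
    have osc: "dist (b s') (b s) < e"
      if "s \<in> {0..real t}" "s' \<in> {0..real t}" "dist s' s \<le> 1 / real (Suc n)" for s s'
      using d(2)[OF that(1,2)] that(3) h by simp
    have "ennreal r < ennreal (exp (\<alpha> * Ts - \<theta> * x - \<theta> * e))"
      using e(2) r(2) by (simp add: ennreal_less_iff)
    also have "\<dots> \<le> stopped_exp \<alpha> \<theta> b x (1 / real (Suc n)) (t * Suc n)"
      by (rule stopped_exp_exponent_lower[where b = b and x = x and K = "t * Suc n"
            and h = "1 / real (Suc n)", unfolded tK, OF b0 x \<alpha> \<theta> _ Ts hit osc]) simp
    finally show ?thesis using r(1) by simp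
  qed
  then show "\<forall>\<^sub>F n in sequentially. y < stopped_exp \<alpha> \<theta> b x (1 / real (Suc n)) (t * Suc n)"
    by (auto simp: eventually_sequentially)
qed

lemma liminf_liminf_stopped_exp_lower:
  fixes b :: "real \<Rightarrow> real"
  assumes cont: "continuous_on {0..} b" and b0: "b 0 = 0" and x: "0 \<le> x"
    and \<alpha>: "0 \<le> \<alpha>" and \<theta>: "0 \<le> \<theta>" and Ts: "0 \<le> Ts"
    and hit: "\<And>s. 0 \<le> s \<Longrightarrow> x \<le> b s \<Longrightarrow> Ts \<le> s"
  shows "ennreal (exp (\<alpha> * Ts - \<theta> * x))
    \<le> liminf (\<lambda>t. liminf (\<lambda>n. stopped_exp \<alpha> \<theta> b x (1 / real (Suc n)) (t * Suc n)))"
proof (rule Liminf_bounded)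
  obtain t0 :: nat where "Ts \<le> real t0" using real_arch_simple by blast
  then have "Ts \<le> real t" if "t0 \<le> t" for t using that by (meson of_nat_le_iff order_trans)
  then show "\<forall>\<^sub>F t in sequentially. ennreal (exp (\<alpha> * Ts - \<theta> * x))
      \<le> liminf (\<lambda>n. stopped_exp \<alpha> \<theta> b x (1 / real (Suc n)) (t * Suc n))"
    unfolding eventually_sequentially
    by (blast intro: stopped_exp_liminf_lower[OF cont b0 x \<alpha> \<theta> Ts _ hit])
qed

lemma first_passage:
  fixes b :: "real \<Rightarrow> real"
  assumes cont: "continuous_on {0..} b" and "\<exists>s\<ge>0. x \<le> b s"
  obtains T where "0 \<le> T" "x \<le> b T" "\<And>s. 0 \<le> s \<Longrightarrow> x \<le> b s \<Longrightarrow> T \<le> s"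
proof
  define E where "E = {0..} \<inter> b -` {x..}"
  have "closed E" unfolding E_def by (rule continuous_closed_preimage[OF cont]) auto
  moreover have "E \<noteq> {}" "bdd_below E" using assms(2) unfolding E_def by (auto intro: bdd_belowI[of _ 0])
  ultimately have "Inf E \<in> E" by (intro closed_contains_Inf)
  then show "0 \<le> Inf E" "x \<le> b (Inf E)" unfolding E_def by auto
  show "Inf E \<le> s" if "0 \<le> s" "x \<le> b s" for s
    by (rule cInf_lower) (use that \<open>bdd_below E\<close> in \<open>auto simp: E_def\<close>)
qed

lemma exp_growth_le_imp_top:
  fixes L :: ennreal
  assumes \<alpha>: "0 < \<alpha>" and lower: "\<And>T. 0 \<le> T \<Longrightarrow> ennreal (exp (\<alpha> * T - c)) \<le> L"
  shows "L = \<top>"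
proof (rule ccontr)
  assume "L \<noteq> \<top>"
  then obtain q where q: "L = ennreal q" "0 \<le> q" by (cases L) auto
  obtain T :: nat where "(q + c) / \<alpha> < real T" using reals_Archimedean2 by blast
  then have "q < \<alpha> * real T - c" using \<alpha> by (simp add: field_simps)
  also have "\<dots> < exp (\<alpha> * real T - c)"
    using exp_ge_add_one_self[of "\<alpha> * real T - c"] by linarith
  finally show False using lower[of "real T"] q by (simp add: ennreal_less_iff)
qed

lemma exp_coupl_time_le_liminf_stopped_exp:
  fixes b :: "real \<Rightarrow> real"
  assumes cont: "continuous_on {0..} b" and b0: "b 0 = 0" and lf: "locally_finite_config P"
    and x: "0 \<le> x" "x' \<le> x" and \<alpha>: "0 \<le> \<alpha>" and \<theta>: "0 \<le> \<theta>" and \<alpha>0: "\<alpha> = 0 \<Longrightarrow> \<theta> = 0"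
  shows "exp_time \<alpha> (coupl_time (ratchet_S b P x) (ratchet_S b P x'))
     \<le> ennreal (exp (x * \<theta>))
       * liminf (\<lambda>t. liminf (\<lambda>n. stopped_exp \<alpha> \<theta> b x (1 / real (Suc n)) (t * Suc n)))"
    (is "?lhs \<le> _ * ?L")
proof (cases "\<exists>s\<ge>0. x \<le> b s")
  case True
  then obtain Ts where Ts: "0 \<le> Ts" "x \<le> b Ts" and hit: "\<And>s. 0 \<le> s \<Longrightarrow> x \<le> b s \<Longrightarrow> Ts \<le> s"
    using first_passage[OF cont] by blast
  have "b r \<le> b Ts" if "0 \<le> r" "r \<le> Ts" for r
    using hit[of r] that Ts(2) by force
  then have "coupl_time (ratchet_S b P x) (ratchet_S b P x') \<le> ereal Ts"
    by (rule coupl_time_le_running_max[OF cont lf Ts(1) x(2) Ts(2)])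
  then obtain c where c: "coupl_time (ratchet_S b P x) (ratchet_S b P x') = ereal c" "c \<le> Ts"
    using coupl_time_nonneg[of "ratchet_S b P x" "ratchet_S b P x'"]
    by (cases "coupl_time (ratchet_S b P x) (ratchet_S b P x')") auto
  have "?lhs \<le> ennreal (exp (\<alpha> * Ts))"
    unfolding c(1) exp_time_def using c(2) \<alpha> by (simp add: mult_left_mono)
  also have "\<dots> = ennreal (exp (x * \<theta>)) * ennreal (exp (\<alpha> * Ts - \<theta> * x))"
    by (simp add: ennreal_mult'[symmetric] exp_add[symmetric] algebra_simps)
  also have "\<dots> \<le> ennreal (exp (x * \<theta>)) * ?L"
    using liminf_liminf_stopped_exp_lower[OF cont b0 x(1) \<alpha> \<theta> Ts(1)] hit
    by (intro mult_left_mono) auto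
  finally show ?thesis .
next
  case False
  \<comment> \<open>\<open>b\<close> never reaches \<open>x\<close>, so every \<open>T \<ge> 0\<close> is a lower bound for the passage time\<close>
  then have lower: "ennreal (exp (\<alpha> * T - \<theta> * x)) \<le> ?L" if "0 \<le> T" for T
    using liminf_liminf_stopped_exp_lower[OF cont b0 x(1) \<alpha> \<theta> that] by auto
  show ?thesis
  proof (cases "\<alpha> = 0")
    case True
    then show ?thesis using lower[of 0] \<alpha>0 by (simp add: exp_time_def)
  next
    case False
    have "?L = \<top>" using \<alpha> False lower by (intro exp_growth_le_imp_top) auto
    then show ?thesis by (simp add: ennreal_mult_top)
  qed
qed

lemma poisson_pp_AE_locally_finite:
  assumes pp: "poisson_pp M \<gamma> N"
  shows "AE \<omega> in M. locally_finite_config (N \<omega>)"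
proof -
  interpret prob_space M using pp unfolding poisson_pp_def by auto
  define A where "A R = {- real R..real R} \<times> {0..real R}" for R :: nat
  have "ppp_test_set (A R)" for R
  proof -
    have "A R = cbox (- real R, 0) (real R, real R)" unfolding A_def cbox_Pair_eq by simp
    then show ?thesis
      unfolding ppp_test_set_def using emeasure_lborel_cbox_finite by (auto simp: A_def)
  qed
  then have "\<forall>R. AE \<omega> in M. finite (N \<omega> \<inter> A R)" using pp unfolding poisson_pp_def by blast
  then have ae: "AE \<omega> in M. \<forall>R. finite (N \<omega> \<inter> A R)" by (subst AE_all_countable)
  have sub: "\<forall>\<omega>\<in>space M. N \<omega> \<subseteq> UNIV \<times> {0..}" using pp unfolding poisson_pp_def by blast
  show ?thesis using ae
  proof (rule AE_mp, intro AE_I2 impI)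
    fix \<omega> assume \<omega>: "\<omega> \<in> space M" and fin: "\<forall>R. finite (N \<omega> \<inter> A R)"
    show "locally_finite_config (N \<omega>)" unfolding locally_finite_config_def
    proof
      fix R :: real
      obtain R' :: nat where "R \<le> real R'" using real_arch_simple by blast
      then have "{p \<in> N \<omega>. \<bar>fst p\<bar> \<le> R \<and> snd p \<le> R} \<subseteq> N \<omega> \<inter> A R'"
        using sub \<omega> unfolding A_def by force
      then show "finite {p \<in> N \<omega>. \<bar>fst p\<bar> \<le> R \<and> snd p \<le> R}"
        using fin finite_subset by blast
    qed
  qed
qed

lemma nn_integral_liminf_liminf_le:
  fixes F :: "nat \<Rightarrow> nat \<Rightarrow> 'a \<Rightarrow> ennreal"
  assumes [measurable]: "\<And>t n. F t n \<in> borel_measurable M"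
    and bound: "\<And>t n. (\<integral>\<^sup>+\<omega>. F t n \<omega> \<partial>M) \<le> c"
  shows "(\<integral>\<^sup>+\<omega>. liminf (\<lambda>t. liminf (\<lambda>n. F t n \<omega>)) \<partial>M) \<le> c"
proof -
  have inner: "(\<integral>\<^sup>+\<omega>. liminf (\<lambda>n. F t n \<omega>) \<partial>M) \<le> c" for t
  proof -
    have "(\<integral>\<^sup>+\<omega>. liminf (\<lambda>n. F t n \<omega>) \<partial>M) \<le> liminf (\<lambda>n. \<integral>\<^sup>+\<omega>. F t n \<omega> \<partial>M)"
      by (rule nn_integral_liminf) simp
    also have "\<dots> \<le> c" by (rule Liminf_le) (use bound in auto)
    finally show ?thesis .
  qed
  have "(\<integral>\<^sup>+\<omega>. liminf (\<lambda>t. liminf (\<lambda>n. F t n \<omega>)) \<partial>M)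
      \<le> liminf (\<lambda>t. \<integral>\<^sup>+\<omega>. liminf (\<lambda>n. F t n \<omega>) \<partial>M)"
    by (rule nn_integral_liminf) measurable
  also have "\<dots> \<le> c" by (rule Liminf_le) (use inner in auto)
  finally show ?thesis .
qed

lemma drift_exponent_root:
  fixes \<mu> \<alpha> :: real
  assumes \<mu>: "0 \<le> \<mu>" and \<alpha>: "0 \<le> \<alpha>" "\<alpha> \<le> \<mu>\<^sup>2 / 2"
  defines "\<theta> \<equiv> \<mu> - sqrt (\<mu>\<^sup>2 - 2 * \<alpha>)"
  shows "0 \<le> \<theta>" and "\<alpha> - \<theta> * \<mu> + \<theta>\<^sup>2 / 2 = 0" and "\<alpha> = 0 \<Longrightarrow> \<theta> = 0"
proof -
  have "sqrt (\<mu>\<^sup>2 - 2 * \<alpha>) \<le> sqrt (\<mu>\<^sup>2)" using \<alpha> by (intro real_sqrt_le_mono) simp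
  then show "0 \<le> \<theta>" unfolding \<theta>_def using \<mu> by simp
  have "\<theta>\<^sup>2 = \<mu>\<^sup>2 - 2 * \<mu> * sqrt (\<mu>\<^sup>2 - 2 * \<alpha>) + (sqrt (\<mu>\<^sup>2 - 2 * \<alpha>))\<^sup>2"
    unfolding \<theta>_def by (simp add: power2_diff)
  also have "\<dots> = 2 * \<mu>\<^sup>2 - 2 * \<mu> * sqrt (\<mu>\<^sup>2 - 2 * \<alpha>) - 2 * \<alpha>" using \<alpha> by simp
  finally have "\<theta>\<^sup>2 / 2 = \<mu>\<^sup>2 - \<mu> * sqrt (\<mu>\<^sup>2 - 2 * \<alpha>) - \<alpha>" by simp
  then show "\<alpha> - \<theta> * \<mu> + \<theta>\<^sup>2 / 2 = 0" unfolding \<theta>_def by (simp add: algebra_simps power2_eq_square)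
  show "\<alpha> = 0 \<Longrightarrow> \<theta> = 0" unfolding \<theta>_def using \<mu> by simp
qed

lemma ratchet_exp_coupl_time_AE_le:
  assumes bm: "std_BM M B" and pp: "poisson_pp M \<gamma> N" and x: "0 \<le> x" "x' \<le> x"
    and \<alpha>: "0 \<le> \<alpha>" and \<theta>: "0 \<le> \<theta>" and \<alpha>0: "\<alpha> = 0 \<Longrightarrow> \<theta> = 0"
  shows "AE \<omega> in M. exp_time \<alpha> (coupl_time (ratchet_S (\<lambda>t. B t \<omega> + \<mu> * t) (N \<omega>) x)
                        (ratchet_S (\<lambda>t. B t \<omega> + \<mu> * t) (N \<omega>) x'))
    \<le> ennreal (exp (x * \<theta>)) * liminf (\<lambda>t. liminf (\<lambda>n.
         stopped_exp \<alpha> \<theta> (\<lambda>t. B t \<omega> + \<mu> * t) x (1 / real (Suc n)) (t * Suc n)))"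
  using poisson_pp_AE_locally_finite[OF pp]
proof (rule AE_mp, intro AE_I2 impI)
  fix \<omega> assume "\<omega> \<in> space M" and lf: "locally_finite_config (N \<omega>)"
  then have "continuous_on {0..} (\<lambda>t. B t \<omega> + \<mu> * t)" "B 0 \<omega> + \<mu> * 0 = 0"
    using bm unfolding std_BM_def by (auto intro!: continuous_intros)
  from exp_coupl_time_le_liminf_stopped_exp[OF this lf x \<alpha> \<theta> \<alpha>0]
  show "exp_time \<alpha> (coupl_time (ratchet_S (\<lambda>t. B t \<omega> + \<mu> * t) (N \<omega>) x)
                        (ratchet_S (\<lambda>t. B t \<omega> + \<mu> * t) (N \<omega>) x'))
    \<le> ennreal (exp (x * \<theta>)) * liminf (\<lambda>t. liminf (\<lambda>n.
         stopped_exp \<alpha> \<theta> (\<lambda>t. B t \<omega> + \<mu> * t) x (1 / real (Suc n)) (t * Suc n)))" .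
qed

theorem lemma2p3:
  fixes M :: "'a measure" and B :: "real \<Rightarrow> 'a \<Rightarrow> real" and N :: "'a \<Rightarrow> (real \<times> real) set"
    and \<mu> \<gamma> x x' \<alpha> :: real
  assumes "std_BM M B" and "poisson_pp M \<gamma> N" and "BM_PPP_indep M B N"
    and "\<mu> > 0" and "\<gamma> \<ge> 0" and "x' \<ge> 0" and "x \<ge> x'"
    and "0 \<le> \<alpha>" and "\<alpha> \<le> \<mu>\<^sup>2 / 2"
  shows "(\<integral>\<^sup>+ \<omega>. exp_time \<alpha>
            (coupl_time (ratchet_S (\<lambda>t. B t \<omega> + \<mu> * t) (N \<omega>) x)
                        (ratchet_S (\<lambda>t. B t \<omega> + \<mu> * t) (N \<omega>) x')) \<partial>M)
         \<le> ennreal (exp (x * (\<mu> - sqrt (\<mu>\<^sup>2 - 2 * \<alpha>))))"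
proof -
  have bm: "std_BM M B" by fact
  have [measurable]: "\<And>t. B t \<in> borel_measurable M" using bm unfolding std_BM_def by auto
  define \<theta> where "\<theta> = \<mu> - sqrt (\<mu>\<^sup>2 - 2 * \<alpha>)"
  note \<theta> = drift_exponent_root[OF less_imp_le[OF \<open>\<mu> > 0\<close>] \<open>0 \<le> \<alpha>\<close> \<open>\<alpha> \<le> \<mu>\<^sup>2 / 2\<close>, folded \<theta>_def]
  define F where "F t n \<omega> = stopped_exp \<alpha> \<theta> (\<lambda>t. B t \<omega> + \<mu> * t) x (1 / real (Suc n)) (t * Suc n)"
    for t n \<omega>
  have [measurable]: "F t n \<in> borel_measurable M" for t n
    unfolding F_def by (rule measurable_stopped_exp) measurable
  have "(\<integral>\<^sup>+ \<omega>. exp_time \<alpha> (coupl_time (ratchet_S (\<lambda>t. B t \<omega> + \<mu> * t) (N \<omega>) x)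
                        (ratchet_S (\<lambda>t. B t \<omega> + \<mu> * t) (N \<omega>) x')) \<partial>M)
      \<le> (\<integral>\<^sup>+\<omega>. ennreal (exp (x * \<theta>)) * liminf (\<lambda>t. liminf (\<lambda>n. F t n \<omega>)) \<partial>M)"
    using ratchet_exp_coupl_time_AE_le[OF bm \<open>poisson_pp M \<gamma> N\<close> _ \<open>x \<ge> x'\<close> \<open>0 \<le> \<alpha>\<close> \<theta>(1,3)]
      \<open>x' \<ge> 0\<close> \<open>x \<ge> x'\<close> unfolding F_def by (intro nn_integral_mono_AE) simp
  also have "\<dots> = ennreal (exp (x * \<theta>)) * (\<integral>\<^sup>+\<omega>. liminf (\<lambda>t. liminf (\<lambda>n. F t n \<omega>)) \<partial>M)"
    by (rule nn_integral_cmult) measurable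
  also have "\<dots> \<le> ennreal (exp (x * \<theta>)) * 1"
  proof (rule mult_left_mono[OF nn_integral_liminf_liminf_le])
    show "(\<integral>\<^sup>+\<omega>. F t n \<omega> \<partial>M) \<le> 1" for t n
      unfolding F_def by (simp add: std_BM_stopped_exp_martingale[OF bm _ \<theta>(2)])
  qed simp_all
  finally show ?thesis unfolding \<theta>_def by simp
qed

end
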